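(* Assume the standing hypotheses in the context. Let $x(t)$ be any solution of $x'=A(t)x+f(t,x)$. Then the system $$Z'(t)=A(t)Z(t)+f(t,x(t)+Z(t))-f(t,x(t))$$ has a unique solution bounded on $\mathbb{R}$, namely $Z\equiv0$.
   Context: Standing hypotheses: $A:\mathbb{R}\to\mathbb{R}^{n\times n}$ is continuous and bounded, $T(t,s)$ is the evolution operator of $x'=A(t)x$. $\mu:\mathbb{R}\to(0,\infty)$ is an increasing differentiable growth rate: $\mu(0)=1$, $\lim_{t\to-\infty}\mu(t)=0$, $\lim_{t\to+\infty}\mu(t)=+\infty$. The system $x'=A(t)x$ admits an algebraic dichotomy: projections $P(s)$, $Q(s)=I-P(s)$, constants $K,\alpha>0$ with $T(t,s)P(s)=P(t)T(t,s)$, $\|T(t,s)P(s)\|\le K(\mu(t)/\mu(s))^{-\alpha}$ ($t\ge s$), $\|T(t,s)Q(s)\|\le K(\mu(s)/\mu(t))^{-\alpha}$ ($t\le s$). $f:\mathbb{R}\times\mathbb{R}^n\to\mathbb{R}^n$ is continuous, $\|f(t,x)\|\le\beta\mu'(t)\mu^{-1}(t)$, $\|f(t,x_1)-f(t,x_2)\|\le\gamma\mu'(t)\mu^{-1}(t)\|x_1-x_2\|$ for constants $\beta,\gamma\ge0$, and $6K\gamma\alpha^{-1}<1$. *)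

theory Defs
  imports "HOL-Analysis.Analysis"
begin

end

theory Submission
  imports Defs "HOL-Analysis.Analysis"
begin

text \<open>
  A bounded solution \<open>Z\<close> of the variational equation solves \<open>Z' = A Z + g\<close> with
  \<open>|g r| \<le> \<gamma> \<mu>'(r)/\<mu>(r) |Z r|\<close>.  Differentiating \<open>\<rho> \<mapsto> T t \<rho> Z \<rho>\<close> (variation of constants)
  and splitting with the dichotomy projections gives, for \<open>s \<le> t\<close>,
  \<open>P t Z t = T t s P s Z s + \<integral>\<^sub>s\<^sup>t T t \<rho> P \<rho> g \<rho> d\<rho>\<close>, and the analogous formula for
  \<open>I - P\<close> with \<open>s \<ge> t\<close>.  With \<open>M = sup |Z|\<close> the kernel bounds make each integral at most
  \<open>K \<gamma> M \<integral> (\<mu> \<rho>/\<mu> t)\<^sup>\<plusminus>\<^sup>\<alpha> \<mu>'(\<rho>)/\<mu>(\<rho>) d\<rho> \<le> K \<gamma> M / \<alpha>\<close>, while the boundary terms vanish as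
  \<open>s \<rightarrow> \<mp>\<infinity>\<close>.  Hence \<open>M \<le> 2 K \<gamma> M / \<alpha>\<close>, so \<open>M = 0\<close> as soon as \<open>2 K \<gamma> < \<alpha>\<close>.

  Of the evolution operator only \<open>\<partial>\<^sub>t T t s = A t T t s\<close> and \<open>T s s = I\<close> are assumed; the cocycle law
  and the continuity of \<open>T t \<rho>\<close> in \<open>\<rho>\<close> are recovered from a Gronwall estimate.
\<close>

lemma le_exp_mult_if_deriv_le:
  fixes \<phi> :: "real \<Rightarrow> real"
  assumes "b \<le> a"
    and \<phi>: "\<And>t. (\<phi> has_real_derivative \<phi>' t) (at t)"
    and growth: "\<And>t. \<phi>' t \<le> c * \<phi> t"
  shows "\<phi> a \<le> exp (c * (a - b)) * \<phi> b"
proof -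
  define h where "h t = exp (- (c * t)) * \<phi> t" for t
  have "h a \<le> h b"
  proof (rule DERIV_nonpos_imp_nonincreasing[OF \<open>b \<le> a\<close>])
    fix t
    have "(h has_real_derivative exp (- (c * t)) * (\<phi>' t - c * \<phi> t)) (at t)"
      unfolding h_def
      by (rule derivative_eq_intros \<phi> refl)+ (simp add: right_diff_distrib)
    moreover have "exp (- (c * t)) * (\<phi>' t - c * \<phi> t) \<le> 0"
      using growth[of t] by (simp add: mult_nonneg_nonpos)
    ultimately show "\<exists>y. (h has_real_derivative y) (at t) \<and> y \<le> 0"
      by blast
  qed
  then have "exp (c * a) * h a \<le> exp (c * a) * h b"
    by simp
  also have "exp (c * a) * h b = exp (c * (a - b)) * \<phi> b"
    by (simp add: h_def mult.assoc[symmetric] exp_add[symmetric] right_diff_distrib)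
  finally show ?thesis
    by (simp add: h_def mult.assoc[symmetric] exp_add[symmetric])
qed

lemma norm_le_exp_if_norm_deriv_le:
  fixes y :: "real \<Rightarrow> 'a::real_inner"
  assumes y: "\<And>t. (y has_vector_derivative y' t) (at t)"
    and growth: "\<And>t. norm (y' t) \<le> L * norm (y t)"
  shows "norm (y a) \<le> exp (L * \<bar>a - b\<bar>) * norm (y b)"
proof -
  define \<phi> where "\<phi> t = y t \<bullet> y t" for t
  have \<phi>: "(\<phi> has_real_derivative 2 * (y t \<bullet> y' t)) (at t)" for t
    using bounded_bilinear.has_vector_derivative[OF bounded_bilinear_inner y y]
    unfolding \<phi>_def by (simp add: has_real_derivative_iff_has_vector_derivative inner_commute)
  have \<phi>'_le: "\<bar>2 * (y t \<bullet> y' t)\<bar> \<le> 2 * L * \<phi> t" for t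
  proof -
    have "\<bar>y t \<bullet> y' t\<bar> \<le> norm (y t) * (L * norm (y t))"
      using Cauchy_Schwarz_ineq2 growth[of t] by (meson mult_left_mono norm_ge_zero order_trans)
    then show ?thesis
      by (simp add: \<phi>_def dot_square_norm power2_eq_square mult_ac)
  qed
  have "\<phi> a \<le> exp (2 * L * \<bar>a - b\<bar>) * \<phi> b"
  proof (cases "b \<le> a")
    case True
    have "\<phi> a \<le> exp (2 * L * (a - b)) * \<phi> b"
      by (rule le_exp_mult_if_deriv_le[OF True \<phi> abs_le_D1[OF \<phi>'_le]])
    with True show ?thesis
      by simp
  next
    case False
    have \<psi>: "((\<lambda>t. \<phi> (- t)) has_real_derivative - (2 * (y (- t) \<bullet> y' (- t)))) (at t)" for t
      using DERIV_chain2[OF \<phi>[of "- t"] DERIV_minus[OF DERIV_ident]] by simp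
    have "\<phi> (- (- a)) \<le> exp (2 * L * (- a - - b)) * \<phi> (- (- b))"
      by (rule le_exp_mult_if_deriv_le[OF _ \<psi> abs_le_D2[OF \<phi>'_le]]) (use False in simp)
    with False show ?thesis
      by simp
  qed
  also have "\<dots> = (exp (L * \<bar>a - b\<bar>) * norm (y b))\<^sup>2"
    by (simp add: \<phi>_def dot_square_norm power_mult_distrib power2_eq_square
        exp_add[symmetric])
  finally have "(norm (y a))\<^sup>2 \<le> (exp (L * \<bar>a - b\<bar>) * norm (y b))\<^sup>2"
    by (simp add: \<phi>_def dot_square_norm)
  then show ?thesis
    by (rule power2_le_imp_le) simp
qed

lemma norm_diff_le_majorant_diff:
  fixes u :: "real \<Rightarrow> 'a::banach"
  assumes "a \<le> b"
    and u: "\<And>t. (u has_vector_derivative u' t) (at t)"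
    and \<Phi>: "\<And>t. (\<Phi> has_real_derivative \<phi> t) (at t)"
    and le: "\<And>t. a \<le> t \<Longrightarrow> t \<le> b \<Longrightarrow> norm (u' t) \<le> \<phi> t"
  shows "norm (u b - u a) \<le> \<Phi> b - \<Phi> a"
proof -
  have u_int: "(u' has_integral (u b - u a)) {a..b}"
    by (rule fundamental_theorem_of_calculus[OF \<open>a \<le> b\<close> has_vector_derivative_at_within[OF u]])
  have \<Phi>_int: "(\<phi> has_integral (\<Phi> b - \<Phi> a)) {a..b}"
    by (rule fundamental_theorem_of_calculus[OF \<open>a \<le> b\<close> has_vector_derivative_at_within])
      (use \<Phi> has_real_derivative_iff_has_vector_derivative in blast)
  have "norm (integral {a..b} u') \<le> integral {a..b} \<phi>"
    by (rule integral_norm_bound_integral[OF has_integral_integrable[OF u_int]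
          has_integral_integrable[OF \<Phi>_int]]) (use le in auto)
  then show ?thesis
    using integral_unique[OF u_int] integral_unique[OF \<Phi>_int] by simp
qed

lemma deriv_nonneg_if_mono:
  fixes f :: "real \<Rightarrow> real"
  assumes "mono f" and "(f has_real_derivative d) (at x)"
  shows "d \<ge> 0"
proof (rule ccontr)
  assume "\<not> d \<ge> 0"
  then obtain e where "e > 0" and e: "\<forall>h > 0. h < e \<longrightarrow> f (x + h) < f x"
    using DERIV_neg_dec_right[OF assms(2)] by (meson not_le)
  have "f x \<le> f (x + e / 2)"
    using \<open>e > 0\<close> by (intro monoD[OF assms(1)]) simp
  moreover have "f (x + e / 2) < f x"
    using e \<open>e > 0\<close> by simp
  ultimately show False
    by simp
qed

lemma has_real_derivative_ratio_powr:
  fixes \<mu> :: "real \<Rightarrow> real"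
  assumes "(\<mu> has_real_derivative d) (at t)" and "\<mu> t > 0" and "c > 0"
  shows "((\<lambda>t. (\<mu> t / c) powr \<beta>) has_real_derivative \<beta> * (\<mu> t / c) powr \<beta> * (d / \<mu> t)) (at t)"
  using assms by (auto intro!: derivative_eq_intros simp: powr_diff field_simps)

lemma bounded_bilinear_matrix_vector_mult: "bounded_bilinear (\<lambda>(M::real^'n^'m) v. M *v v)"
proof -
  have "bilinear (\<lambda>(M::real^'n^'m) v. M *v v)"
    unfolding bilinear_def
    by (auto intro!: linearI simp: algebra_simps scaleR_matrix_vector_assoc)
  then show ?thesis
    by (simp add: bilinear_conv_bounded_bilinear)
qed

lemma bounded_range_matrix_vector_bound:
  fixes A :: "'a \<Rightarrow> real^'n^'m"
  assumes "bounded (range A)"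
  obtains L where "\<And>t v. norm (A t *v v) \<le> L * norm v"
proof -
  obtain B where B: "\<And>t. norm (A t) \<le> B"
    using assms by (auto simp: bounded_iff)
  obtain C where C: "\<And>M v. norm ((M::real^'n^'m) *v v) \<le> norm M * norm v * C" "C > 0"
    using bounded_bilinear.pos_bounded[OF bounded_bilinear_matrix_vector_mult] by blast
  have "norm (A t *v v) \<le> (B * C) * norm v" for t v
  proof -
    have "norm (A t *v v) \<le> norm (A t) * norm v * C"
      by (rule C(1))
    also have "\<dots> \<le> B * norm v * C"
      using B[of t] C(2) by (intro mult_right_mono) auto
    finally show ?thesis
      by (simp add: mult_ac)
  qed
  then show ?thesis
    by (rule that)
qed

lemma isCont_matrix_if_isCont_columns:
  fixes M :: "real \<Rightarrow> real^'n^'m"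
  assumes "\<And>v. isCont (\<lambda>x. M x *v v) a"
  shows "isCont M a"
proof -
  have entry: "M x $ i $ j = (M x *v axis j 1) $ i" for x i j
    by (simp add: matrix_vector_mult_basis column_def)
  have "((\<lambda>x. M x $ i $ j) \<longlongrightarrow> M a $ i $ j) (at a)" for i j
    unfolding entry using assms[of "axis j 1"] by (simp add: isCont_def tendsto_vec_nth)
  then show ?thesis
    unfolding isCont_def by (intro vec_tendstoI)
qed

lemma (in bounded_bilinear) has_vector_derivative_continuous_times_vanishing:
  fixes f :: "real \<Rightarrow> 'a" and g :: "real \<Rightarrow> 'b"
  assumes f: "isCont f r" and g: "(g has_vector_derivative g') (at r)" and g0: "g r = 0"
  shows "((\<lambda>x. prod (f x) (g x)) has_vector_derivative prod (f r) g') (at r)"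
proof -
  define E where "E x = (g x - (x - r) *\<^sub>R g') /\<^sub>R norm (x - r)" for x
  define Q where
    "Q x = (prod (f x) (g x) - prod (f r) (g r) - (x - r) *\<^sub>R prod (f r) g') /\<^sub>R norm (x - r)"
    for x
  obtain K where K: "\<And>a b. norm (prod a b) \<le> norm a * norm b * K"
    using bounded by blast
  have "(E \<longlongrightarrow> 0) (at r)"
    using g g0 by (simp add: has_vector_derivative_def has_derivative_at_within E_def[abs_def])
  then have "((\<lambda>x. norm (f x) * norm (E x) * K + norm (f x - f r) * norm g' * K)
      \<longlongrightarrow> norm (f r) * norm (0::'b) * K + norm (f r - f r) * norm g' * K) (at r)"
    using f by (intro tendsto_intros) (simp_all add: isCont_def)
  then have majorant: "((\<lambda>x. norm (f x) * norm (E x) * K + norm (f x - f r) * norm g' * K) \<longlongrightarrow> 0) (at r)"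
    by simp
  have "norm (Q x) \<le> norm (f x) * norm (E x) * K + norm (f x - f r) * norm g' * K" for x
  proof -
    have "Q x = prod (f x) (E x) + sgn (x - r) *\<^sub>R prod (f x - f r) g'"
      by (simp add: Q_def E_def g0 diff_left diff_right add_right zero_right scaleR_right scaleR_left
          sgn_div_norm divide_inverse algebra_simps)
    moreover have "norm (sgn (x - r) *\<^sub>R prod (f x - f r) g') \<le> norm (prod (f x - f r) g')"
      by (cases "x = r") (simp_all add: abs_sgn_eq)
    ultimately show ?thesis
      using norm_triangle_ineq[of "prod (f x) (E x)" "sgn (x - r) *\<^sub>R prod (f x - f r) g'"]
        K[of "f x" "E x"] K[of "f x - f r" g'] by simp
  qed
  then have "(Q \<longlongrightarrow> 0) (at r)"
    by (intro Lim_null_comparison[OF always_eventually majorant] allI)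
  then show ?thesis
    by (simp add: has_vector_derivative_def has_derivative_at_within bounded_linear_scaleR_left
        Q_def[abs_def])
qed

locale linear_evolution =
  fixes A :: "real \<Rightarrow> real^'n^'n" and T :: "real \<Rightarrow> real \<Rightarrow> real^'n^'n" and L :: real
  assumes A_bound: "\<And>t v. norm (A t *v v) \<le> L * norm v"
    and T_init: "\<And>s. T s s = mat 1"
    and T_deriv: "\<And>t s. ((\<lambda>t. T t s) has_vector_derivative A t ** T t s) (at t)"
begin

lemma evolution_apply_deriv:
  "((\<lambda>t. T t s *v v) has_vector_derivative A t *v (T t s *v v)) (at t)"
  using bounded_linear.has_vector_derivative
      [OF bounded_bilinear.bounded_linear_left[OF bounded_bilinear_matrix_vector_mult] T_deriv]
  by (simp add: matrix_vector_mul_assoc)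

lemma evolution_norm_bound: "norm (T t s *v v) \<le> exp (L * \<bar>t - s\<bar>) * norm v"
  using norm_le_exp_if_norm_deriv_le[where y = "\<lambda>t. T t s *v v" and a = t and b = s,
      OF evolution_apply_deriv A_bound]
  by (simp add: T_init)

lemma evolution_cocycle: "T t s ** T s r = T t r"
proof -
  have "(T t s ** T s r) *v v = T t r *v v" for v
  proof -
    define y where "y \<tau> = T \<tau> s *v (T s r *v v) - T \<tau> r *v v" for \<tau>
    have "(y has_vector_derivative A \<tau> *v y \<tau>) (at \<tau>)" for \<tau>
      unfolding y_def using has_vector_derivative_diff[OF evolution_apply_deriv evolution_apply_deriv]
      by (simp add: matrix_vector_mult_diff_distrib)
    from norm_le_exp_if_norm_deriv_le[OF this A_bound, where a = t and b = s]
    have "y t = 0"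
      by (simp add: y_def T_init)
    then show ?thesis
      by (simp add: y_def matrix_vector_mul_assoc)
  qed
  then show ?thesis
    by (simp add: matrix_eq)
qed

lemma isCont_evolution_initial_time: "isCont (\<lambda>\<rho>. T t \<rho>) r"
proof (rule isCont_matrix_if_isCont_columns)
  fix v
  have "((\<lambda>\<rho>. T \<rho> r *v v) \<longlongrightarrow> v) (at r)"
    using has_vector_derivative_continuous[OF evolution_apply_deriv[of r v r]]
    by (simp add: continuous_at T_init)
  then have "((\<lambda>\<rho>. exp (L * \<bar>t - \<rho>\<bar>) * norm (v - T \<rho> r *v v))
      \<longlongrightarrow> exp (L * \<bar>t - r\<bar>) * norm (v - v)) (at r)"
    by (intro tendsto_intros)
  then have lim: "((\<lambda>\<rho>. exp (L * \<bar>t - \<rho>\<bar>) * norm (v - T \<rho> r *v v)) \<longlongrightarrow> 0) (at r)"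
    by simp
  have "norm (T t \<rho> *v v - T t r *v v) \<le> exp (L * \<bar>t - \<rho>\<bar>) * norm (v - T \<rho> r *v v)" for \<rho>
  proof -
    have "T t \<rho> *v v - T t r *v v = T t \<rho> *v (v - T \<rho> r *v v)"
      by (simp add: matrix_vector_mult_diff_distrib matrix_vector_mul_assoc evolution_cocycle)
    then show ?thesis
      using evolution_norm_bound by simp
  qed
  then have "((\<lambda>\<rho>. T t \<rho> *v v - T t r *v v) \<longlongrightarrow> 0) (at r)"
    by (intro Lim_null_comparison[OF always_eventually lim] allI)
  then show "isCont (\<lambda>\<rho>. T t \<rho> *v v) r"
    by (simp add: isCont_def LIM_zero_iff)
qed

lemma variation_of_constants:
  assumes Z: "(Z has_vector_derivative A r *v Z r + g) (at r)"
  shows "((\<lambda>\<rho>. T t \<rho> *v Z \<rho>) has_vector_derivative T t r *v g) (at r)"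
proof -
  \<comment> \<open>\<open>T t \<rho>\<close> need not be differentiable in \<open>\<rho>\<close>: by the cocycle law
    \<open>T t \<rho> Z \<rho> = T t r Z r + T t \<rho> D \<rho>\<close> with \<open>D r = 0\<close>, so continuity in \<open>\<rho>\<close> suffices.\<close>
  define D where "D \<rho> = Z \<rho> - T \<rho> r *v Z r" for \<rho>
  have D: "(D has_vector_derivative g) (at r)"
    unfolding D_def using has_vector_derivative_diff[OF Z evolution_apply_deriv[of r "Z r" r]]
    by (simp add: T_init)
  have TD: "((\<lambda>\<rho>. T t \<rho> *v D \<rho>) has_vector_derivative T t r *v g) (at r)"
    by (rule bounded_bilinear.has_vector_derivative_continuous_times_vanishing
        [OF bounded_bilinear_matrix_vector_mult isCont_evolution_initial_time D]) (simp add: D_def T_init)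
  have "((\<lambda>\<rho>. T t r *v Z r + T t \<rho> *v D \<rho>) has_vector_derivative T t r *v g) (at r)"
    using has_vector_derivative_add[OF has_vector_derivative_const TD] by simp
  moreover have "T t r *v Z r + T t \<rho> *v D \<rho> = T t \<rho> *v Z \<rho>" for \<rho>
    by (simp add: D_def matrix_vector_mult_diff_distrib matrix_vector_mul_assoc evolution_cocycle)
  ultimately show ?thesis
    by simp
qed

end

locale algebraic_dichotomy = linear_evolution A T L
  for A :: "real \<Rightarrow> real^'n^'n" and T and L +
  fixes P :: "real \<Rightarrow> real^'n^'n" and \<mu> :: "real \<Rightarrow> real" and K \<alpha> :: real
  assumes mu_pos: "\<And>t. \<mu> t > 0"
    and mu_mono: "mono \<mu>"
    and mu_diff: "\<And>t. \<mu> differentiable (at t)"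
    and mu_bot: "(\<mu> \<longlongrightarrow> 0) at_bot"
    and mu_top: "filterlim \<mu> at_top at_top"
    and K_pos: "K > 0" and alpha_pos: "\<alpha> > 0"
    and P_inv: "\<And>t s. T t s ** P s = P t ** T t s"
    and dich_P: "\<And>t s. t \<ge> s \<Longrightarrow>
       onorm (\<lambda>v. (T t s ** P s) *v v) \<le> K * (\<mu> t / \<mu> s) powr (- \<alpha>)"
    and dich_Q: "\<And>t s. t \<le> s \<Longrightarrow>
       onorm (\<lambda>v. (T t s ** (mat 1 - P s)) *v v) \<le> K * (\<mu> s / \<mu> t) powr (- \<alpha>)"
begin

lemma mu_deriv: "(\<mu> has_real_derivative deriv \<mu> t) (at t)"
  using mu_diff DERIV_deriv_iff_real_differentiable by blast

lemma mu_ratio_powr_tendsto_at_bot: "((\<lambda>s. (\<mu> s / \<mu> t) powr \<alpha>) \<longlongrightarrow> 0) at_bot"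
proof -
  have "((\<lambda>s. \<mu> s / \<mu> t) \<longlongrightarrow> 0 / \<mu> t) at_bot"
    using mu_pos[of t] by (intro tendsto_divide mu_bot tendsto_const) simp
  then show ?thesis
    using mu_pos alpha_pos by (intro tendsto_zero_powrI always_eventually) (auto intro: less_imp_le)
qed

lemma mu_ratio_powr_tendsto_at_top: "((\<lambda>s. (\<mu> s / \<mu> t) powr (- \<alpha>)) \<longlongrightarrow> 0) at_top"
proof -
  have "((\<lambda>s. \<mu> t / \<mu> s) \<longlongrightarrow> 0) at_top"
    by (rule tendsto_divide_0[OF tendsto_const filterlim_at_top_imp_at_infinity[OF mu_top]])
  then have "((\<lambda>s. (\<mu> t / \<mu> s) powr \<alpha>) \<longlongrightarrow> 0) at_top"
    using mu_pos alpha_pos by (intro tendsto_zero_powrI always_eventually) (auto intro: less_imp_le)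
  then show ?thesis
    using mu_pos by (simp add: powr_minus_divide powr_divide)
qed

lemma stable_kernel_bound:
  assumes "s \<le> t"
  shows "norm ((T t s ** P s) *v v) \<le> K * (\<mu> s / \<mu> t) powr \<alpha> * norm v"
proof -
  have "norm ((T t s ** P s) *v v) \<le> onorm (\<lambda>v. (T t s ** P s) *v v) * norm v"
    using onorm[OF matrix_vector_mul_bounded_linear] by blast
  also have "\<dots> \<le> K * (\<mu> t / \<mu> s) powr (- \<alpha>) * norm v"
    using dich_P[OF assms] by (simp add: mult_right_mono)
  finally show ?thesis
    using mu_pos by (simp add: powr_minus_divide powr_divide)
qed

lemma unstable_kernel_bound:
  assumes "t \<le> s"
  shows "norm ((T t s ** (mat 1 - P s)) *v v) \<le> K * (\<mu> s / \<mu> t) powr (- \<alpha>) * norm v"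
proof -
  have "norm ((T t s ** (mat 1 - P s)) *v v) \<le> onorm (\<lambda>v. (T t s ** (mat 1 - P s)) *v v) * norm v"
    using onorm[OF matrix_vector_mul_bounded_linear] by blast
  also have "\<dots> \<le> K * (\<mu> s / \<mu> t) powr (- \<alpha>) * norm v"
    using dich_Q[OF assms] by (simp add: mult_right_mono)
  finally show ?thesis .
qed

lemma projection_evolution_commute: "P t *v (T t s *v v) = (T t s ** P s) *v v"
  by (simp add: matrix_vector_mul_assoc P_inv)

lemma complement_evolution_commute:
  "(mat 1 - P t) *v (T t s *v v) = (T t s ** (mat 1 - P s)) *v v"
proof -
  have "(T t s ** (mat 1 - P s)) *v v = T t s *v v - (T t s ** P s) *v v"
    by (simp add: matrix_vector_mul_assoc[symmetric] matrix_vector_mult_diff_rdistrib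
        matrix_vector_mult_diff_distrib)
  then show ?thesis
    by (simp add: matrix_vector_mult_diff_rdistrib projection_evolution_commute)
qed

lemma stable_increment_bound:
  assumes Z: "\<And>r. (Z has_vector_derivative A r *v Z r + g r) (at r)"
    and g_bound: "\<And>r. norm (g r) \<le> c * (deriv \<mu> r / \<mu> r)"
    and "c \<ge> 0" and "s \<le> t"
  shows "norm (P t *v Z t - (T t s ** P s) *v Z s) \<le> K * c / \<alpha>"
proof -
  define u where "u \<rho> = P t *v (T t \<rho> *v Z \<rho>)" for \<rho>
  define \<Phi> where "\<Phi> \<rho> = K * c / \<alpha> * (\<mu> \<rho> / \<mu> t) powr \<alpha>" for \<rho>
  have "(u has_vector_derivative P t *v (T t \<rho> *v g \<rho>)) (at \<rho>)" for \<rho>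
    unfolding u_def[abs_def]
    by (rule bounded_linear.has_vector_derivative[OF matrix_vector_mul_bounded_linear
          variation_of_constants[OF Z]])
  then have u: "(u has_vector_derivative (T t \<rho> ** P \<rho>) *v g \<rho>) (at \<rho>)" for \<rho>
    by (simp only: projection_evolution_commute)
  have \<Phi>: "(\<Phi> has_real_derivative
      K * c / \<alpha> * (\<alpha> * (\<mu> \<rho> / \<mu> t) powr \<alpha> * (deriv \<mu> \<rho> / \<mu> \<rho>))) (at \<rho>)" for \<rho>
    unfolding \<Phi>_def by (intro DERIV_cmult has_real_derivative_ratio_powr mu_deriv mu_pos)
  have "norm (u t - u s) \<le> \<Phi> t - \<Phi> s"
  proof (rule norm_diff_le_majorant_diff[OF \<open>s \<le> t\<close> u \<Phi>])
    fix \<rho>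
    assume "s \<le> \<rho>" "\<rho> \<le> t"
    have "norm ((T t \<rho> ** P \<rho>) *v g \<rho>) \<le> K * (\<mu> \<rho> / \<mu> t) powr \<alpha> * norm (g \<rho>)"
      using \<open>\<rho> \<le> t\<close> by (rule stable_kernel_bound)
    also have "\<dots> \<le> K * (\<mu> \<rho> / \<mu> t) powr \<alpha> * (c * (deriv \<mu> \<rho> / \<mu> \<rho>))"
      using K_pos by (intro mult_left_mono g_bound) simp
    finally show "norm ((T t \<rho> ** P \<rho>) *v g \<rho>)
        \<le> K * c / \<alpha> * (\<alpha> * (\<mu> \<rho> / \<mu> t) powr \<alpha> * (deriv \<mu> \<rho> / \<mu> \<rho>))"
      using alpha_pos by (simp add: mult_ac)
  qed
  also have "\<dots> \<le> K * c / \<alpha>"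
    using mu_pos[of t] K_pos alpha_pos \<open>c \<ge> 0\<close> by (simp add: \<Phi>_def)
  finally show ?thesis
    by (simp add: u_def T_init projection_evolution_commute)
qed

lemma unstable_increment_bound:
  assumes Z: "\<And>r. (Z has_vector_derivative A r *v Z r + g r) (at r)"
    and g_bound: "\<And>r. norm (g r) \<le> c * (deriv \<mu> r / \<mu> r)"
    and "c \<ge> 0" and "t \<le> s"
  shows "norm ((T t s ** (mat 1 - P s)) *v Z s - (mat 1 - P t) *v Z t) \<le> K * c / \<alpha>"
proof -
  define u where "u \<rho> = (mat 1 - P t) *v (T t \<rho> *v Z \<rho>)" for \<rho>
  define \<Phi> where "\<Phi> \<rho> = - (K * c / \<alpha>) * (\<mu> \<rho> / \<mu> t) powr (- \<alpha>)" for \<rho>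
  have "(u has_vector_derivative (mat 1 - P t) *v (T t \<rho> *v g \<rho>)) (at \<rho>)" for \<rho>
    unfolding u_def[abs_def]
    by (rule bounded_linear.has_vector_derivative[OF matrix_vector_mul_bounded_linear
          variation_of_constants[OF Z]])
  then have u: "(u has_vector_derivative (T t \<rho> ** (mat 1 - P \<rho>)) *v g \<rho>) (at \<rho>)" for \<rho>
    by (simp only: complement_evolution_commute)
  have \<Phi>: "(\<Phi> has_real_derivative
      - (K * c / \<alpha>) * (- \<alpha> * (\<mu> \<rho> / \<mu> t) powr (- \<alpha>) * (deriv \<mu> \<rho> / \<mu> \<rho>))) (at \<rho>)" for \<rho>
    unfolding \<Phi>_def by (intro DERIV_cmult has_real_derivative_ratio_powr mu_deriv mu_pos)
  have "norm (u s - u t) \<le> \<Phi> s - \<Phi> t"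
  proof (rule norm_diff_le_majorant_diff[OF \<open>t \<le> s\<close> u \<Phi>])
    fix \<rho>
    assume "t \<le> \<rho>" "\<rho> \<le> s"
    have "norm ((T t \<rho> ** (mat 1 - P \<rho>)) *v g \<rho>)
        \<le> K * (\<mu> \<rho> / \<mu> t) powr (- \<alpha>) * norm (g \<rho>)"
      using \<open>t \<le> \<rho>\<close> by (rule unstable_kernel_bound)
    also have "\<dots> \<le> K * (\<mu> \<rho> / \<mu> t) powr (- \<alpha>) * (c * (deriv \<mu> \<rho> / \<mu> \<rho>))"
      using K_pos by (intro mult_left_mono g_bound) simp
    finally show "norm ((T t \<rho> ** (mat 1 - P \<rho>)) *v g \<rho>)
        \<le> - (K * c / \<alpha>) * (- \<alpha> * (\<mu> \<rho> / \<mu> t) powr (- \<alpha>) * (deriv \<mu> \<rho> / \<mu> \<rho>))"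
      using alpha_pos by (simp add: mult_ac)
  qed
  also have "\<dots> \<le> K * c / \<alpha>"
    using mu_pos[of t] K_pos alpha_pos \<open>c \<ge> 0\<close> by (simp add: \<Phi>_def)
  finally show ?thesis
    by (simp add: u_def T_init complement_evolution_commute)
qed

lemma stable_part_bound:
  assumes Z: "\<And>r. (Z has_vector_derivative A r *v Z r + g r) (at r)"
    and Z_bound: "\<And>r. norm (Z r) \<le> M"
    and g_bound: "\<And>r. norm (g r) \<le> c * (deriv \<mu> r / \<mu> r)"
    and "c \<ge> 0"
  shows "norm (P t *v Z t) \<le> K * c / \<alpha>"
proof -
  have bound: "norm (P t *v Z t) \<le> K * c / \<alpha> + K * (\<mu> s / \<mu> t) powr \<alpha> * M" if "s \<le> t" for s
  proof -
    have "norm ((T t s ** P s) *v Z s) \<le> K * (\<mu> s / \<mu> t) powr \<alpha> * norm (Z s)"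
      using that by (rule stable_kernel_bound)
    also have "\<dots> \<le> K * (\<mu> s / \<mu> t) powr \<alpha> * M"
      using K_pos by (intro mult_left_mono Z_bound) simp
    finally show ?thesis
      using stable_increment_bound[OF Z g_bound \<open>c \<ge> 0\<close> that]
        norm_triangle_ineq[of "P t *v Z t - (T t s ** P s) *v Z s" "(T t s ** P s) *v Z s"]
      by simp
  qed
  have lim: "((\<lambda>s. K * c / \<alpha> + K * (\<mu> s / \<mu> t) powr \<alpha> * M) \<longlongrightarrow> K * c / \<alpha> + K * 0 * M) at_bot"
    by (intro tendsto_intros mu_ratio_powr_tendsto_at_bot)
  have "\<forall>\<^sub>F s in at_bot. norm (P t *v Z t) \<le> K * c / \<alpha> + K * (\<mu> s / \<mu> t) powr \<alpha> * M"
    using eventually_le_at_bot[of t] by eventually_elim (rule bound)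
  from tendsto_le[OF trivial_limit_at_bot_linorder lim tendsto_const this]
  show ?thesis
    by simp
qed

lemma unstable_part_bound:
  assumes Z: "\<And>r. (Z has_vector_derivative A r *v Z r + g r) (at r)"
    and Z_bound: "\<And>r. norm (Z r) \<le> M"
    and g_bound: "\<And>r. norm (g r) \<le> c * (deriv \<mu> r / \<mu> r)"
    and "c \<ge> 0"
  shows "norm ((mat 1 - P t) *v Z t) \<le> K * c / \<alpha>"
proof -
  have bound: "norm ((mat 1 - P t) *v Z t) \<le> K * c / \<alpha> + K * (\<mu> s / \<mu> t) powr (- \<alpha>) * M"
    if "t \<le> s" for s
  proof -
    have "norm ((T t s ** (mat 1 - P s)) *v Z s) \<le> K * (\<mu> s / \<mu> t) powr (- \<alpha>) * norm (Z s)"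
      using that by (rule unstable_kernel_bound)
    also have "\<dots> \<le> K * (\<mu> s / \<mu> t) powr (- \<alpha>) * M"
      using K_pos by (intro mult_left_mono Z_bound) simp
    finally show ?thesis
      using unstable_increment_bound[OF Z g_bound \<open>c \<ge> 0\<close> that]
        norm_triangle_ineq4[of "(T t s ** (mat 1 - P s)) *v Z s"
          "(T t s ** (mat 1 - P s)) *v Z s - (mat 1 - P t) *v Z t"]
      by simp
  qed
  have lim: "((\<lambda>s. K * c / \<alpha> + K * (\<mu> s / \<mu> t) powr (- \<alpha>) * M)
      \<longlongrightarrow> K * c / \<alpha> + K * 0 * M) at_top"
    by (intro tendsto_intros mu_ratio_powr_tendsto_at_top)
  have "\<forall>\<^sub>F s in at_top.
      norm ((mat 1 - P t) *v Z t) \<le> K * c / \<alpha> + K * (\<mu> s / \<mu> t) powr (- \<alpha>) * M"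
    using eventually_ge_at_top[of t] by eventually_elim (rule bound)
  from tendsto_le[OF trivial_limit_at_top_linorder lim tendsto_const this]
  show ?thesis
    by simp
qed

lemma bounded_solution_norm_bound:
  assumes Z: "\<And>r. (Z has_vector_derivative A r *v Z r + g r) (at r)"
    and Z_bound: "\<And>r. norm (Z r) \<le> M"
    and g_bound: "\<And>r. norm (g r) \<le> c * (deriv \<mu> r / \<mu> r)"
    and "c \<ge> 0"
  shows "norm (Z t) \<le> 2 * K * c / \<alpha>"
proof -
  have "norm (Z t) \<le> norm (P t *v Z t) + norm ((mat 1 - P t) *v Z t)"
    using norm_triangle_ineq[of "P t *v Z t" "(mat 1 - P t) *v Z t"]
    by (simp add: matrix_vector_mult_diff_rdistrib)
  also have "\<dots> \<le> K * c / \<alpha> + K * c / \<alpha>"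
    by (intro add_mono stable_part_bound[OF assms] unstable_part_bound[OF assms])
  finally show ?thesis
    by simp
qed

lemma bounded_solution_eq_0:
  assumes Z: "\<And>r. (Z has_vector_derivative A r *v Z r + g r) (at r)"
    and "bounded (range Z)"
    and g_bound: "\<And>r. norm (g r) \<le> \<gamma> * (deriv \<mu> r / \<mu> r) * norm (Z r)"
    and "\<gamma> \<ge> 0" and "2 * K * \<gamma> < \<alpha>"
  shows "Z t = 0"
proof -
  define M where "M = (SUP r. norm (Z r))"
  have "bdd_above (range (\<lambda>r. norm (Z r)))"
    using \<open>bounded (range Z)\<close> by (auto simp: bounded_iff intro: bdd_aboveI2)
  then have Z_le: "norm (Z r) \<le> M" for r
    unfolding M_def by (rule cSUP_upper2) auto
  have "M \<ge> 0"
    using Z_le[of t] norm_ge_zero order_trans by blast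
  have g_le: "norm (g r) \<le> (\<gamma> * M) * (deriv \<mu> r / \<mu> r)" for r
  proof -
    have weight_nonneg: "deriv \<mu> r / \<mu> r \<ge> 0"
      using deriv_nonneg_if_mono[OF mu_mono mu_deriv] mu_pos[of r] by simp
    have "norm (g r) \<le> \<gamma> * (deriv \<mu> r / \<mu> r) * norm (Z r)"
      by (rule g_bound)
    also have "\<dots> \<le> \<gamma> * (deriv \<mu> r / \<mu> r) * M"
      by (intro mult_left_mono Z_le mult_nonneg_nonneg \<open>\<gamma> \<ge> 0\<close> weight_nonneg)
    finally show ?thesis
      by (simp add: mult_ac)
  qed
  have "norm (Z r) \<le> 2 * K * (\<gamma> * M) / \<alpha>" for r
    using \<open>\<gamma> \<ge> 0\<close> \<open>M \<ge> 0\<close> by (intro bounded_solution_norm_bound[OF Z Z_le g_le]) simp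
  then have "M \<le> 2 * K * \<gamma> / \<alpha> * M"
    unfolding M_def by (intro cSUP_least) (auto simp: field_simps)
  then have "(1 - 2 * K * \<gamma> / \<alpha>) * M \<le> 0"
    by (simp add: algebra_simps)
  moreover have "2 * K * \<gamma> / \<alpha> < 1"
    using \<open>2 * K * \<gamma> < \<alpha>\<close> alpha_pos by simp
  ultimately have "M \<le> 0"
    by (simp add: mult_le_0_iff)
  then show ?thesis
    using Z_le[of t] by (metis norm_le_zero_iff order_trans)
qed

end

theorem lemma3p4:
  fixes A :: "real \<Rightarrow> real^'n^'n"
    and T :: "real \<Rightarrow> real \<Rightarrow> real^'n^'n"
    and P :: "real \<Rightarrow> real^'n^'n"
    and \<mu> :: "real \<Rightarrow> real"
    and f :: "real \<Rightarrow> real^'n \<Rightarrow> real^'n"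
    and x :: "real \<Rightarrow> real^'n"
    and K \<alpha> \<beta> \<gamma> :: real
  assumes A_cont: "continuous_on UNIV A"
    and A_bdd: "bounded (range A)"
    and T_init: "\<And>s. T s s = mat 1"
    and T_deriv: "\<And>t s. ((\<lambda>t. T t s) has_vector_derivative (A t ** T t s)) (at t)"
    and mu_pos: "\<And>t. \<mu> t > 0"
    and mu_mono: "mono \<mu>"
    and mu_diff: "\<And>t. \<mu> differentiable (at t)"
    and mu_0: "\<mu> 0 = 1"
    and mu_bot: "(\<mu> \<longlongrightarrow> 0) at_bot"
    and mu_top: "filterlim \<mu> at_top at_top"
    and K_pos: "K > 0" and alpha_pos: "\<alpha> > 0"
    and P_proj: "\<And>s. P s ** P s = P s"
    and P_inv: "\<And>t s. T t s ** P s = P t ** T t s"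
    and dich_P: "\<And>t s. t \<ge> s \<Longrightarrow>
       onorm (\<lambda>v. (T t s ** P s) *v v) \<le> K * (\<mu> t / \<mu> s) powr (- \<alpha>)"
    and dich_Q: "\<And>t s. t \<le> s \<Longrightarrow>
       onorm (\<lambda>v. (T t s ** (mat 1 - P s)) *v v) \<le> K * (\<mu> s / \<mu> t) powr (- \<alpha>)"
    and f_cont: "continuous_on UNIV (\<lambda>(t, y). f t y)"
    and beta_nn: "\<beta> \<ge> 0" and gamma_nn: "\<gamma> \<ge> 0"
    and f_bdd: "\<And>t y. norm (f t y) \<le> \<beta> * deriv \<mu> t * inverse (\<mu> t)"
    and f_lip: "\<And>t y1 y2. norm (f t y1 - f t y2) \<le> \<gamma> * deriv \<mu> t * inverse (\<mu> t) * norm (y1 - y2)"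
    and small: "6 * K * \<gamma> / \<alpha> < 1"
    and x_sol: "\<And>t. (x has_vector_derivative (A t *v x t + f t (x t))) (at t)"
  shows "(\<forall>t. ((\<lambda>t. 0 :: real^'n) has_vector_derivative
              (A t *v 0 + f t (x t + 0) - f t (x t))) (at t))
    \<and> (\<forall>Z :: real \<Rightarrow> real^'n.
          (\<forall>t. (Z has_vector_derivative (A t *v Z t + f t (x t + Z t) - f t (x t))) (at t))
          \<and> bounded (range Z) \<longrightarrow> (\<forall>t. Z t = 0))"
proof -
  obtain L where L: "\<And>t v. norm (A t *v v) \<le> L * norm v"
    using bounded_range_matrix_vector_bound[OF A_bdd] by blast
  interpret algebraic_dichotomy A T L P \<mu> K \<alpha>
    by unfold_locales (fact L T_init T_deriv mu_pos mu_mono mu_diff mu_bot mu_top K_pos alpha_pos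
        P_inv dich_P dich_Q)+
  have "Z t = 0"
    if Z: "\<forall>t. (Z has_vector_derivative (A t *v Z t + f t (x t + Z t) - f t (x t))) (at t)"
      and "bounded (range Z)" for Z :: "real \<Rightarrow> real^'n" and t
  proof (rule bounded_solution_eq_0[where g = "\<lambda>r. f r (x r + Z r) - f r (x r)"])
    show "(Z has_vector_derivative A r *v Z r + (f r (x r + Z r) - f r (x r))) (at r)" for r
      using Z by (simp add: add_diff_eq)
    show "norm (f r (x r + Z r) - f r (x r)) \<le> \<gamma> * (deriv \<mu> r / \<mu> r) * norm (Z r)" for r
      using f_lip[of r "x r + Z r" "x r"] by (simp add: divide_inverse)
    show "2 * K * \<gamma> < \<alpha>"
      using small K_pos gamma_nn alpha_pos by (simp add: field_simps)
  qed (use \<open>bounded (range Z)\<close> gamma_nn in auto)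
  then show ?thesis
    by simp
qed

end
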